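(* Let $\alpha$ and $\beta$ be 5-cycles in the symmetric group $S_6$ such that $\mathrm{Supp}(\alpha) \neq \mathrm{Supp}(\beta)$. Then one of the permutations $\alpha\beta$, $\alpha\beta^3$, $\alpha^2\beta$ is not a 5-cycle.
   Context: Permutations act on the right and are composed left to right, i.e. $i(\alpha\beta) = (i\alpha)\beta$. $\mathrm{Supp}(\alpha)$ denotes the set of points moved by $\alpha$. The lemma is used in showing that the d-identity $(x_1^{12}=1)\vee(x_2^{30}=1)\vee((x_1x_1^{x_2})^{12}=1)\vee((x_1x_1^{3x_2})^{12}=1)\vee((x_1^2x_1^{x_2})^{12}=1)$ holds in the alternating group $A_6$ (here $x_1^{x_2}=x_2^{-1}x_1x_2$). *)

theory Defs
  imports "HOL-Combinatorics.Cycles"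
begin

text \<open>The symmetric group S_6 is modelled as the permutations of {1..6} (functions
  nat => nat that permute {1..6}). Permutations act on the right and compose left to
  right, so the product alpha beta (first alpha, then beta) is the function beta o alpha.\<close>

definition Supp :: "(nat \<Rightarrow> nat) \<Rightarrow> nat set" where
  "Supp \<sigma> = {i. \<sigma> i \<noteq> i}"

definition is_5cycle :: "(nat \<Rightarrow> nat) \<Rightarrow> bool" where
  "is_5cycle \<sigma> \<longleftrightarrow> (\<exists>cs. distinct cs \<and> length cs = 5 \<and> set cs \<subseteq> {1..6} \<and> \<sigma> = cycle_of_list cs)"

definition pmul :: "(nat \<Rightarrow> nat) \<Rightarrow> (nat \<Rightarrow> nat) \<Rightarrow> (nat \<Rightarrow> nat)" where
  "pmul a b = b \<circ> a"

end

(* Conjugation by a permutation of {1..6} preserves both the hypotheses and the conclusion.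
   Write alpha as the cycle of a list of its support; rotating that list, we may put last the
   point f fixed by beta (f lies in Supp alpha because the supports differ). Conjugating this list
   to [1, 2, 3, 4, 5] makes alpha = (1 2 3 4 5) and beta a 5-cycle fixing 5, hence
   beta = (6 a b c d) with {a, b, c, d} = {1, 2, 3, 4}. In each of these 24 cases one of the three
   products has a fifth power different from the identity, which a direct evaluation confirms,
   whereas every 5-cycle has fifth power the identity. *)
theory Submission
  imports Defs "HOL-Combinatorics.Multiset_Permutations"
begin

lemma Supp_cycle_of_list:
  assumes "distinct cs" and "2 \<le> length cs"
  shows "Supp (cycle_of_list cs) = set cs"
proof
  show "Supp (cycle_of_list cs) \<subseteq> set cs"
    unfolding Supp_def using id_outside_supp by fastforce
  show "set cs \<subseteq> Supp (cycle_of_list cs)"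
  proof
    fix x assume "x \<in> set cs"
    then obtain i where i: "i < length cs" "x = cs ! i"
      by (auto simp: in_set_conv_nth)
    have "map (cycle_of_list cs) cs = rotate 1 cs"
      using cyclic_rotation[OF assms(1), of 1] by simp
    then have "cycle_of_list cs x = rotate 1 cs ! i"
      using i by (metis nth_map)
    also have "\<dots> = cs ! (Suc i mod length cs)"
      using i nth_rotate[of i cs 1] by simp
    finally have "cycle_of_list cs x = cs ! (Suc i mod length cs)" .
    moreover have "Suc i mod length cs \<noteq> i"
      using i(1) assms(2) by (cases "Suc i = length cs") auto
    moreover have "Suc i mod length cs < length cs"
      using i(1) by (intro mod_less_divisor) auto
    ultimately show "x \<in> Supp (cycle_of_list cs)"
      using i assms(1) by (simp add: Supp_def nth_eq_iff_index_eq)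
  qed
qed

lemma is_5cycle_funpow_5: "is_5cycle \<sigma> \<Longrightarrow> \<sigma> ^^ 5 = id"
  unfolding is_5cycle_def using cycle_is_id_root by fastforce

lemma is_5cycleE:
  assumes "is_5cycle \<sigma>"
  obtains cs m where "\<sigma> = cycle_of_list cs" "distinct cs" "length cs = 5"
    "m \<in> {1..6}" "set cs = {1..6} - {m}"
proof -
  obtain cs where cs: "distinct cs" "length cs = 5" "set cs \<subseteq> {1..6}" "\<sigma> = cycle_of_list cs"
    using assms unfolding is_5cycle_def by blast
  have "card ({1..6} - set cs) = 1"
    using cs by (simp add: card_Diff_subset distinct_card)
  then obtain m where "{1..6} - set cs = {m}"
    by (rule card_1_singletonE)
  then have "m \<in> {1..6}" "set cs = {1..6} - {m}"
    using cs(3) by auto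
  with cs that show thesis by blast
qed

lemma cycle_of_list_rotate_to_front:
  assumes "distinct cs" and "x \<in> set cs"
  obtains ys where "cycle_of_list cs = cycle_of_list (x # ys)"
    "distinct (x # ys)" "set (x # ys) = set cs"
proof -
  obtain us vs where cs: "cs = us @ x # vs"
    using assms(2) by (meson in_set_conv_decomp)
  have "rotate (length us) cs = x # vs @ us"
    unfolding cs by (simp add: rotate_append)
  then have "cycle_of_list cs = cycle_of_list (x # vs @ us)"
    by (metis assms(1) cycle_of_list_rotate_independent)
  moreover have "distinct (x # vs @ us)" "set (x # vs @ us) = set cs"
    using assms(1) unfolding cs by auto
  ultimately show thesis
    by (rule that)
qed

lemma cycle_of_list_rotate_to_back:
  assumes "distinct cs" and "x \<in> set cs"
  obtains ys where "cycle_of_list cs = cycle_of_list (ys @ [x])"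
    "distinct (ys @ [x])" "set (ys @ [x]) = set cs"
proof -
  obtain ys where ys: "cycle_of_list cs = cycle_of_list (x # ys)"
    "distinct (x # ys)" "set (x # ys) = set cs"
    using assms by (rule cycle_of_list_rotate_to_front)
  have "cycle_of_list (x # ys) = cycle_of_list (ys @ [x])"
    using cycle_of_list_rotate_independent[OF ys(2), of 1] by simp
  with ys that show thesis by auto
qed

lemma permutation_of_list_zip:
  assumes "distinct xs" and "distinct ys" and "set xs = set ys"
  shows "permutation_of_list (zip xs ys) permutes set xs"
    and "map (permutation_of_list (zip xs ys)) xs = ys"
proof -
  have len: "length xs = length ys"
    using assms by (metis distinct_card)
  then have "list_permutes (zip xs ys) (set xs)"
    using assms by (simp add: list_permutes_def)
  then show "permutation_of_list (zip xs ys) permutes set xs"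
    by (rule permutation_of_list_permutes)
  show "map (permutation_of_list (zip xs ys)) xs = ys"
  proof (rule nth_equalityI)
    fix i assume "i < length (map (permutation_of_list (zip xs ys)) xs)"
    then have "(xs ! i, ys ! i) \<in> set (zip xs ys)"
      using len by (auto simp: in_set_zip)
    then show "map (permutation_of_list (zip xs ys)) xs ! i = ys ! i"
      using \<open>i < _\<close> assms(1) len by (simp add: permutation_of_list_unique')
  qed (simp add: len)
qed

lemma conjugate_funpow:
  assumes "bij t"
  shows "(t \<circ> g \<circ> inv t) ^^ n = t \<circ> g ^^ n \<circ> inv t"
proof (induction n)
  case 0
  show ?case using assms by (simp add: bij_is_surj surj_f_inv_f fun_eq_iff)
next
  case (Suc n)
  then show ?case using assms by (simp add: bij_is_inj fun_eq_iff)
qed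

lemma pmul_conjugate:
  assumes "bij t"
  shows "pmul (t \<circ> a \<circ> inv t) (t \<circ> b \<circ> inv t) = t \<circ> pmul a b \<circ> inv t"
  using assms by (simp add: pmul_def bij_is_inj fun_eq_iff)

lemma conjugate_eq_id_iff:
  assumes "bij t"
  shows "t \<circ> g \<circ> inv t = id \<longleftrightarrow> g = id"
proof
  assume conj_id: "t \<circ> g \<circ> inv t = id"
  show "g = id"
  proof
    fix x
    have "g x = inv t ((t \<circ> g \<circ> inv t) (t x))"
      using assms by (simp add: bij_is_inj)
    then show "g x = id x"
      using conj_id assms by (simp add: bij_is_inj)
  qed
qed (use assms in \<open>simp add: bij_is_surj surj_f_inv_f fun_eq_iff\<close>)

lemma is_5cycle_pair_lists:
  assumes "is_5cycle \<alpha>" and "is_5cycle \<beta>" and "Supp \<alpha> \<noteq> Supp \<beta>"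
  obtains ps f m qs where "\<alpha> = cycle_of_list (ps @ [f])" "\<beta> = cycle_of_list (m # qs)"
    "distinct (ps @ [f, m])" "set (ps @ [f, m]) = {1..6}"
    "distinct (m # qs)" "set (m # qs) = {1..6} - {f}"
proof -
  obtain as m where as: "\<alpha> = cycle_of_list as" "distinct as" "length as = 5"
      "m \<in> {1..6}" "set as = {1..6} - {m}"
    using assms(1) by (rule is_5cycleE)
  obtain bs f where bs: "\<beta> = cycle_of_list bs" "distinct bs" "length bs = 5"
      "f \<in> {1..6}" "set bs = {1..6} - {f}"
    using assms(2) by (rule is_5cycleE)
  have "set as \<noteq> set bs"
    using assms(3) as bs by (simp add: Supp_cycle_of_list)
  then have "f \<noteq> m"
    using as(5) bs(5) by auto
  then have "f \<in> set as" "m \<in> set bs"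
    using as bs by auto
  obtain ps where ps: "cycle_of_list as = cycle_of_list (ps @ [f])"
      "distinct (ps @ [f])" "set (ps @ [f]) = set as"
    using as(2) \<open>f \<in> set as\<close> by (rule cycle_of_list_rotate_to_back)
  obtain qs where qs: "cycle_of_list bs = cycle_of_list (m # qs)"
      "distinct (m # qs)" "set (m # qs) = set bs"
    using bs(2) \<open>m \<in> set bs\<close> by (rule cycle_of_list_rotate_to_front)
  show thesis
  proof (rule that)
    show "\<alpha> = cycle_of_list (ps @ [f])"
      by (simp only: as(1) ps(1))
    show "\<beta> = cycle_of_list (m # qs)"
      by (simp only: bs(1) qs(1))
    have ps_f: "set (ps @ [f]) = {1..6} - {m}"
      using ps(3) as(5) by (rule trans)
    then show "distinct (ps @ [f, m])"
      using ps(2) by auto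
    have "set (ps @ [f, m]) = insert m (set (ps @ [f]))"
      by auto
    also have "\<dots> = {1..6}"
      unfolding ps_f using as(4) by (rule insert_Diff)
    finally show "set (ps @ [f, m]) = {1..6}" .
    show "distinct (m # qs)"
      by (fact qs(2))
    show "set (m # qs) = {1..6} - {f}"
      using qs(3) bs(5) by (rule trans)
  qed
qed

lemma is_5cycle_pair_normal_form:
  assumes "is_5cycle \<alpha>" and "is_5cycle \<beta>" and "Supp \<alpha> \<noteq> Supp \<beta>"
  obtains t rs where "bij t" "rs \<in> permutations_of_set {1, 2, 3, 4 :: nat}"
    "\<alpha> = t \<circ> cycle_of_list [1, 2, 3, 4, 5] \<circ> inv t"
    "\<beta> = t \<circ> cycle_of_list (6 # rs) \<circ> inv t"
proof -
  obtain ps f m qs where \<alpha>: "\<alpha> = cycle_of_list (ps @ [f])" and \<beta>: "\<beta> = cycle_of_list (m # qs)"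
    and L: "distinct (ps @ [f, m])" "set (ps @ [f, m]) = {1..6}"
    and qs: "distinct (m # qs)" "set (m # qs) = {1..6} - {f}"
    using assms by (rule is_5cycle_pair_lists)
  define t where "t = permutation_of_list (zip [1, 2, 3, 4, 5, 6] (ps @ [f, m]))"
  have "set [1, 2, 3, 4, 5, 6] = {1..6 :: nat}"
    by auto
  then have "t permutes {1..6}" "map t [1, 2, 3, 4, 5] @ [t 6] = (ps @ [f]) @ [m]"
    using permutation_of_list_zip[of "[1, 2, 3, 4, 5, 6]" "ps @ [f, m]"] L
    unfolding t_def by simp_all
  then have t: "t permutes {1..6}" "map t [1, 2, 3, 4, 5] = ps @ [f]" "t 6 = m"
    unfolding append1_eq_conv by simp_all
  have bij: "bij t"
    using t(1) by (rule permutes_bij)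
  have \<alpha>_conj: "\<alpha> = t \<circ> cycle_of_list [1, 2, 3, 4, 5] \<circ> inv t"
    unfolding \<alpha> t(2)[symmetric] by (rule conjugation_of_cycle[symmetric]) (simp_all add: bij)
  define rs where "rs = map (inv t) qs"
  have "t \<circ> inv t = id"
    using bij bij_is_surj surj_iff by blast
  then have map_rs: "map t (6 # rs) = m # qs"
    using t(3) by (simp add: rs_def)
  then have distinct_rs: "distinct (6 # rs)"
    using qs(1) by (metis distinct_map)
  then have \<beta>_conj: "\<beta> = t \<circ> cycle_of_list (6 # rs) \<circ> inv t"
    unfolding \<beta> map_rs[symmetric] by (rule conjugation_of_cycle[symmetric]) (simp add: bij)
  have "t ` set (6 # rs) = t ` ({1..6} - {5})"
    using qs(2) map_rs t(1,2) bij
    by (simp add: bij_is_inj image_set_diff permutes_image flip: set_map)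
  then have set_rs: "set (6 # rs) = {1..6} - {5}"
    using bij bij_is_inj inj_image_eq_iff by metis
  have "set rs = set (6 # rs) - {6}"
    using distinct_rs by auto
  also have "\<dots> = {1, 2, 3, 4}"
    unfolding set_rs by auto
  finally have "rs \<in> permutations_of_set {1, 2, 3, 4}"
    using distinct_rs by auto
  with bij \<alpha>_conj \<beta>_conj show thesis
    by (intro that)
qed

lemma normal_form_products_not_of_order_5:
  fixes rs :: "nat list"
  defines "a \<equiv> cycle_of_list [1, 2, 3, 4, 5]" and "b \<equiv> cycle_of_list (6 # rs)"
  assumes "rs \<in> permutations_of_set {1, 2, 3, 4}"
  shows "pmul a b ^^ 5 \<noteq> id \<or> pmul a (b ^^ 3) ^^ 5 \<noteq> id \<or> pmul (a ^^ 2) b ^^ 5 \<noteq> id"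
proof -
  let ?xs = "[1, 2, 3, 4, 5, 6 :: nat]"
  have "rs \<in> set (permutations_of_set_list [1, 2, 3, 4])"
    using assms(3) permutations_of_list[of "[1, 2, 3, 4 :: nat]"] by simp
  then have "map (pmul a b ^^ 5) ?xs \<noteq> ?xs \<or> map (pmul a (b ^^ 3) ^^ 5) ?xs \<noteq> ?xs
      \<or> map (pmul (a ^^ 2) b ^^ 5) ?xs \<noteq> ?xs"
    \<comment> \<open>Split into the 24 concrete cases first: simplifying the products with a symbolic
      \<open>rs\<close> blows up.\<close>
    unfolding a_def b_def permutations_of_set_list_def
    by (simp add: permutations_of_set_aux_list.simps, elim disjE)
      (simp_all add: pmul_def eval_nat_numeral transpose_def)
  then show ?thesis
    by (metis list.map_id)
qed

theorem lemma5:
  fixes \<alpha> \<beta> :: "nat \<Rightarrow> nat"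
  assumes "\<alpha> permutes {1..6}" and "\<beta> permutes {1..6}"
    and "is_5cycle \<alpha>" and "is_5cycle \<beta>"
    and "Supp \<alpha> \<noteq> Supp \<beta>"
  shows "\<not> is_5cycle (pmul \<alpha> \<beta>) \<or> \<not> is_5cycle (pmul \<alpha> (\<beta> ^^ 3))
         \<or> \<not> is_5cycle (pmul (\<alpha> ^^ 2) \<beta>)"
proof -
  obtain t rs where t: "bij t" and rs: "rs \<in> permutations_of_set {1, 2, 3, 4 :: nat}"
    and \<alpha>: "\<alpha> = t \<circ> cycle_of_list [1, 2, 3, 4, 5] \<circ> inv t"
    and \<beta>: "\<beta> = t \<circ> cycle_of_list (6 # rs) \<circ> inv t"
    using assms(3-5) by (rule is_5cycle_pair_normal_form)
  define a b where "a = cycle_of_list [1, 2, 3, 4, 5 :: nat]" and "b = cycle_of_list (6 # rs)"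
  have "pmul \<alpha> \<beta> = t \<circ> pmul a b \<circ> inv t"
    "pmul \<alpha> (\<beta> ^^ 3) = t \<circ> pmul a (b ^^ 3) \<circ> inv t"
    "pmul (\<alpha> ^^ 2) \<beta> = t \<circ> pmul (a ^^ 2) b \<circ> inv t"
    unfolding \<alpha> \<beta> a_def[symmetric] b_def[symmetric]
    by (simp_all only: conjugate_funpow[OF t] pmul_conjugate[OF t])
  moreover have "g ^^ 5 = id" if "is_5cycle (t \<circ> g \<circ> inv t)" for g
    using is_5cycle_funpow_5[OF that] t by (simp add: conjugate_funpow conjugate_eq_id_iff)
  ultimately show ?thesis
    using normal_form_products_not_of_order_5[OF rs] unfolding a_def b_def by metis
qed

end
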